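(* Let $\{x_k\}$ be the random sequence generated by the SKM method. Define $\bar{x}_k = \frac{1}{k}\sum_{l=1}^{k} x_l$. Then for any $0 < \delta < 2$, $$\mathbb{E}[f(\bar{x}_k)] \leq \frac{d(x_0,P)^2}{2\delta k(2-\delta)}.$$
   Context: Linear feasibility problem $Ax \leq b$ with $A \in \mathbb{R}^{m\times n}$, $b \in \mathbb{R}^m$, assumed consistent, with rows $a_i^T$ normalized ($\|a_i\|=1$). $P = \{x : Ax \leq b\}$, $\mathcal{P}(x)$ the Euclidean projection onto $P$, $d(x,P) = \|x-\mathcal{P}(x)\|$. Sampling: at each iteration a set $\tau$ of $\beta$ rows is chosen uniformly at random among all $\binom{m}{\beta}$ subsets and $i^* = \arg\max_{i\in\tau}(a_i^Tx-b_i)^+$; $\mathbb{E}_{\mathbb{S}}$ denotes expectation over this sampling. $f(x) = \mathbb{E}_{\mathbb{S}}\big[\tfrac12|(a_{i^*}^Tx-b_{i^*})^+|^2\big]$. SKM method (Sampling Kaczmarz Motzkin): starting from $x_0$, at each iteration sample $\tau_k$, pick $i^*$ at $x_k$, and set $x_{k+1} = x_k - \delta(a_{i^*}^Tx_k-b_{i^*})^+a_{i^*}$. *)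

theory Defs
  imports "HOL-Analysis.Analysis" "HOL-Probability.Probability"
begin

definition pos :: "real \<Rightarrow> real" where "pos t = max t 0"

definition feas_set :: "nat \<Rightarrow> (nat \<Rightarrow> real^'n) \<Rightarrow> (nat \<Rightarrow> real) \<Rightarrow> (real^'n) set" where
  "feas_set m a b = {x. \<forall>i<m. a i \<bullet> x \<le> b i}"

definition samp :: "nat \<Rightarrow> nat \<Rightarrow> nat set pmf" where
  "samp m \<beta> = pmf_of_set {\<tau>. \<tau> \<subseteq> {..<m} \<and> card \<tau> = \<beta>}"

definition is_maxsel :: "(nat \<Rightarrow> real^'n) \<Rightarrow> (nat \<Rightarrow> real) \<Rightarrow> (real^'n \<Rightarrow> nat set \<Rightarrow> nat) \<Rightarrow> nat \<Rightarrow> nat \<Rightarrow> bool" where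
  "is_maxsel a b sel m \<beta> \<longleftrightarrow> (\<forall>x \<tau>. \<tau> \<subseteq> {..<m} \<and> card \<tau> = \<beta> \<longrightarrow>
      sel x \<tau> \<in> \<tau> \<and> (\<forall>j\<in>\<tau>. pos (a j \<bullet> x - b j) \<le> pos (a (sel x \<tau>) \<bullet> x - b (sel x \<tau>))))"

definition fobj :: "nat \<Rightarrow> nat \<Rightarrow> (nat \<Rightarrow> real^'n) \<Rightarrow> (nat \<Rightarrow> real) \<Rightarrow> (real^'n \<Rightarrow> nat set \<Rightarrow> nat) \<Rightarrow> real^'n \<Rightarrow> real" where
  "fobj m \<beta> a b sel x = measure_pmf.expectation (samp m \<beta>)
     (\<lambda>\<tau>. (1/2) * (pos (a (sel x \<tau>) \<bullet> x - b (sel x \<tau>)))^2)"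

definition skm_step :: "(nat \<Rightarrow> real^'n) \<Rightarrow> (nat \<Rightarrow> real) \<Rightarrow> (real^'n \<Rightarrow> nat set \<Rightarrow> nat) \<Rightarrow> real \<Rightarrow> real^'n \<Rightarrow> nat set \<Rightarrow> real^'n" where
  "skm_step a b sel \<delta> x \<tau> = x - (\<delta> * pos (a (sel x \<tau>) \<bullet> x - b (sel x \<tau>))) *\<^sub>R a (sel x \<tau>)"

fun skm_traj :: "nat \<Rightarrow> nat \<Rightarrow> (nat \<Rightarrow> real^'n) \<Rightarrow> (nat \<Rightarrow> real) \<Rightarrow> (real^'n \<Rightarrow> nat set \<Rightarrow> nat) \<Rightarrow> real \<Rightarrow> real^'n \<Rightarrow> nat \<Rightarrow> (real^'n) list pmf" where
  "skm_traj m \<beta> a b sel \<delta> x0 0 = return_pmf [x0]"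
| "skm_traj m \<beta> a b sel \<delta> x0 (Suc k) =
     bind_pmf (skm_traj m \<beta> a b sel \<delta> x0 k)
       (\<lambda>xs. map_pmf (\<lambda>\<tau>. xs @ [skm_step a b sel \<delta> (last xs) \<tau>]) (samp m \<beta>))"

definition avg_iter :: "nat \<Rightarrow> (real^'n) list \<Rightarrow> real^'n" where
  "avg_iter k xs = (1 / real k) *\<^sub>R (\<Sum>l=1..k. xs ! l)"

end

theory Submission
  imports Defs
begin

text \<open>An SKM step is a relaxed projection onto a halfspace containing \<open>P\<close>, so
  \<open>d(x\<^sub>k\<^sub>+\<^sub>1, P)\<^sup>2 \<le> d(x\<^sub>k, P)\<^sup>2 - \<delta>(2 - \<delta>) r\<^sup>2\<close> for the selected residual \<open>r\<close>; averaging over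
  the sample gives \<open>E d(x\<^sub>k\<^sub>+\<^sub>1, P)\<^sup>2 + 2\<delta>(2 - \<delta>) f(x\<^sub>k) \<le> d(x\<^sub>k, P)\<^sup>2\<close>. Telescoping bounds
  \<open>E \<Sum>\<^sub>l f(x\<^sub>l)\<close> by \<open>d(x\<^sub>0, P)\<^sup>2 / (2\<delta>(2 - \<delta>))\<close>. Finally \<open>f\<close> is convex, because with the maximal
  selection rule the sampled residual is a maximum of convex functions, and Jensen's inequality
  passes from the sum to the average.\<close>

lemma pos_nonneg: "0 \<le> pos t"
  unfolding pos_def by simp

lemma pos_mult_self: "pos t * t = (pos t)\<^sup>2"
  unfolding pos_def by (auto simp: power2_eq_square max_def)

lemma convex_on_pos_power2: "convex_on UNIV (\<lambda>t. (pos t)\<^sup>2)"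
proof (rule convex_onI)
  fix t x y :: real
  assume t: "0 < t" "t < 1"
  define p q where "p = pos x" and "q = pos y"
  have "(1 - t) * x \<le> (1 - t) * p" "t * y \<le> t * q"
    using t by (auto intro!: mult_left_mono simp: p_def q_def pos_def)
  moreover have "0 \<le> (1 - t) * p + t * q"
    using t by (simp add: p_def q_def pos_nonneg)
  ultimately have "pos ((1 - t) * x + t * y) \<le> (1 - t) * p + t * q"
    unfolding pos_def by simp
  then have "(pos ((1 - t) * x + t * y))\<^sup>2 \<le> ((1 - t) * p + t * q)\<^sup>2"
    by (intro power_mono) (auto simp: pos_nonneg)
  also have "\<dots> = (1 - t) * p\<^sup>2 + t * q\<^sup>2 - t * (1 - t) * (p - q)\<^sup>2"
    by (simp add: power2_eq_square algebra_simps)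
  also have "\<dots> \<le> (1 - t) * p\<^sup>2 + t * q\<^sup>2"
    using t by simp
  finally show "(pos ((1 - t) *\<^sub>R x + t *\<^sub>R y))\<^sup>2 \<le> (1 - t) * (pos x)\<^sup>2 + t * (pos y)\<^sup>2"
    unfolding p_def q_def by simp
qed simp

lemma expectation_mono_finite_pmf:
  fixes f g :: "'a \<Rightarrow> real"
  assumes "finite (set_pmf p)" "\<And>x. x \<in> set_pmf p \<Longrightarrow> f x \<le> g x"
  shows "measure_pmf.expectation p f \<le> measure_pmf.expectation p g"
  using assms by (intro integral_mono_AE AE_pmfI) (auto intro: integrable_measure_pmf_finite)

lemma expectation_bind_pmf_finite:
  fixes h :: "'b \<Rightarrow> real"
  assumes "finite (set_pmf p)" "\<And>x. x \<in> set_pmf p \<Longrightarrow> finite (set_pmf (f x))"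
  shows "measure_pmf.expectation (p \<bind> f) h
           = measure_pmf.expectation p (\<lambda>x. measure_pmf.expectation (f x) h)"
  using assms
  by (simp add: pmf_expectation_bind[of "set_pmf p"] integral_measure_pmf[of "set_pmf p"])

lemma convex_on_expectation:
  fixes g :: "'b \<Rightarrow> 'a::real_vector \<Rightarrow> real"
  assumes "finite (set_pmf p)" "\<And>\<omega>. \<omega> \<in> set_pmf p \<Longrightarrow> convex_on S (g \<omega>)"
  shows "convex_on S (\<lambda>x. measure_pmf.expectation p (\<lambda>\<omega>. g \<omega> x))"
proof (rule convex_onI)
  fix t :: real and x y
  assume t: "0 < t" "t < 1" and xy: "x \<in> S" "y \<in> S"
  have int: "integrable (measure_pmf p) h" for h :: "'b \<Rightarrow> real"
    using assms(1) by (rule integrable_measure_pmf_finite)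
  have "measure_pmf.expectation p (\<lambda>\<omega>. g \<omega> ((1 - t) *\<^sub>R x + t *\<^sub>R y))
      \<le> measure_pmf.expectation p (\<lambda>\<omega>. (1 - t) * g \<omega> x + t * g \<omega> y)"
    using assms t xy by (intro expectation_mono_finite_pmf convex_onD) auto
  also have "\<dots> = (1 - t) * measure_pmf.expectation p (\<lambda>\<omega>. g \<omega> x)
                  + t * measure_pmf.expectation p (\<lambda>\<omega>. g \<omega> y)"
    by (simp add: int)
  finally show "measure_pmf.expectation p (\<lambda>\<omega>. g \<omega> ((1 - t) *\<^sub>R x + t *\<^sub>R y))
      \<le> (1 - t) * measure_pmf.expectation p (\<lambda>\<omega>. g \<omega> x)
         + t * measure_pmf.expectation p (\<lambda>\<omega>. g \<omega> y)" .
next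
  obtain \<omega> where "\<omega> \<in> set_pmf p"
    using set_pmf_not_empty[of p] by blast
  then show "convex S"
    using assms(2) convex_on_imp_convex by blast
qed

lemma norm_relaxed_projection_le:
  fixes x p u :: "'a::real_inner"
  assumes "norm u = 1" "u \<bullet> p \<le> c" "0 \<le> \<delta>"
  shows "(norm (x - (\<delta> * pos (u \<bullet> x - c)) *\<^sub>R u - p))\<^sup>2
           \<le> (norm (x - p))\<^sup>2 - \<delta> * (2 - \<delta>) * (pos (u \<bullet> x - c))\<^sup>2"
proof -
  define r where "r = pos (u \<bullet> x - c)"
  have "r\<^sup>2 = r * (u \<bullet> x - c)"
    unfolding r_def by (simp add: pos_mult_self)
  also have "\<dots> \<le> r * (u \<bullet> (x - p))"
    using assms(2) by (intro mult_left_mono) (auto simp: r_def pos_nonneg inner_diff_right)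
  finally have residual_le: "r\<^sup>2 \<le> r * (u \<bullet> (x - p))" .
  have "(norm (x - (\<delta> * r) *\<^sub>R u - p))\<^sup>2 = (norm ((x - p) - (\<delta> * r) *\<^sub>R u))\<^sup>2"
    by (simp add: algebra_simps)
  also have "\<dots> = (x - p) \<bullet> (x - p) - 2 * \<delta> * (r * (u \<bullet> (x - p))) + \<delta>\<^sup>2 * r\<^sup>2 * (u \<bullet> u)"
    unfolding power2_norm_eq_inner
    by (simp add: inner_diff_left inner_diff_right inner_commute power2_eq_square algebra_simps)
  also have "\<dots> = (norm (x - p))\<^sup>2 - 2 * \<delta> * (r * (u \<bullet> (x - p))) + \<delta>\<^sup>2 * r\<^sup>2"
    using assms(1) by (simp add: power2_norm_eq_inner[symmetric])
  also have "\<dots> \<le> (norm (x - p))\<^sup>2 - 2 * \<delta> * r\<^sup>2 + \<delta>\<^sup>2 * r\<^sup>2"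
    using residual_le assms(3) by (simp add: mult_left_mono)
  finally show ?thesis
    unfolding r_def by (simp add: power2_eq_square algebra_simps)
qed

lemma infdist_relaxed_projection_le:
  fixes S :: "'a::euclidean_space set"
  assumes "closed S" "S \<noteq> {}" "\<And>p. p \<in> S \<Longrightarrow> u \<bullet> p \<le> c" "norm u = 1" "0 \<le> \<delta>"
  shows "(infdist (x - (\<delta> * pos (u \<bullet> x - c)) *\<^sub>R u) S)\<^sup>2
           \<le> (infdist x S)\<^sup>2 - \<delta> * (2 - \<delta>) * (pos (u \<bullet> x - c))\<^sup>2"
proof -
  obtain p where p: "p \<in> S" "infdist x S = dist x p"
    using infdist_attains_inf[OF assms(1,2)] by blast
  let ?y = "x - (\<delta> * pos (u \<bullet> x - c)) *\<^sub>R u"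
  have "(infdist ?y S)\<^sup>2 \<le> (dist ?y p)\<^sup>2"
    using p(1) by (intro power_mono infdist_le) (auto simp: infdist_nonneg)
  also have "\<dots> \<le> (norm (x - p))\<^sup>2 - \<delta> * (2 - \<delta>) * (pos (u \<bullet> x - c))\<^sup>2"
    unfolding dist_norm using assms p(1) by (intro norm_relaxed_projection_le) auto
  finally show ?thesis
    using p(2) by (simp add: dist_norm)
qed

lemma closed_feas_set: "closed (feas_set m a b)"
proof -
  have "feas_set m a b = (\<Inter>i<m. {x. a i \<bullet> x \<le> b i})"
    unfolding feas_set_def by auto
  then show ?thesis
    by (auto intro!: closed_INT closed_halfspace_le)
qed

lemma set_pmf_samp:
  assumes "\<beta> \<le> m"
  shows "set_pmf (samp m \<beta>) = {\<tau>. \<tau> \<subseteq> {..<m} \<and> card \<tau> = \<beta>}"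
proof -
  have "finite {\<tau>. \<tau> \<subseteq> {..<m} \<and> card \<tau> = \<beta>}"
    by (rule finite_subset[of _ "Pow {..<m}"]) auto
  moreover have "{..<\<beta>} \<in> {\<tau>. \<tau> \<subseteq> {..<m} \<and> card \<tau> = \<beta>}"
    using assms by auto
  ultimately show ?thesis
    unfolding samp_def by (intro set_pmf_of_set) blast+
qed

lemma finite_set_pmf_samp:
  assumes "\<beta> \<le> m"
  shows "finite (set_pmf (samp m \<beta>))"
  unfolding set_pmf_samp[OF assms] by (rule finite_subset[of _ "Pow {..<m}"]) auto

lemma set_pmf_skm_traj:
  assumes "xs \<in> set_pmf (skm_traj m \<beta> a b sel \<delta> x0 k)"
  shows "length xs = Suc k"
  using assms by (induction k arbitrary: xs) auto

lemma last_skm_traj: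
  assumes "xs \<in> set_pmf (skm_traj m \<beta> a b sel \<delta> x0 k)"
  shows "last xs = xs ! k"
  using set_pmf_skm_traj[OF assms] by (cases xs rule: rev_cases) auto

lemma finite_set_pmf_skm_traj:
  assumes "\<beta> \<le> m"
  shows "finite (set_pmf (skm_traj m \<beta> a b sel \<delta> x0 k))"
  by (induction k) (auto simp: finite_set_pmf_samp[OF assms])

lemma convex_on_maxsel_residual:
  fixes a :: "nat \<Rightarrow> real^'n"
  assumes "is_maxsel a b sel m \<beta>" "\<tau> \<subseteq> {..<m}" "card \<tau> = \<beta>"
  shows "convex_on UNIV (\<lambda>x. (pos (a (sel x \<tau>) \<bullet> x - b (sel x \<tau>)))\<^sup>2)"
proof (rule convex_onI)
  fix t :: real and x y :: "real^'n"
  assume t: "0 < t" "t < 1"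
  \<comment> \<open>Whatever maximiser \<open>sel\<close> picks, compare at the one chosen for the convex combination.\<close>
  define j where "j = sel ((1 - t) *\<^sub>R x + t *\<^sub>R y) \<tau>"
  have j: "j \<in> \<tau>"
    using assms unfolding is_maxsel_def j_def by blast
  have maximal: "(pos (a j \<bullet> z - b j))\<^sup>2 \<le> (pos (a (sel z \<tau>) \<bullet> z - b (sel z \<tau>)))\<^sup>2" for z
    using assms j unfolding is_maxsel_def by (intro power_mono) (auto simp: pos_nonneg)
  have "a j \<bullet> ((1 - t) *\<^sub>R x + t *\<^sub>R y) - b j = (1 - t) *\<^sub>R (a j \<bullet> x - b j) + t *\<^sub>R (a j \<bullet> y - b j)"
    by (simp add: inner_add_right algebra_simps)
  then have "(pos (a j \<bullet> ((1 - t) *\<^sub>R x + t *\<^sub>R y) - b j))\<^sup>2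
      \<le> (1 - t) * (pos (a j \<bullet> x - b j))\<^sup>2 + t * (pos (a j \<bullet> y - b j))\<^sup>2"
    using t convex_onD[OF convex_on_pos_power2, of t] by simp
  also have "\<dots> \<le> (1 - t) * (pos (a (sel x \<tau>) \<bullet> x - b (sel x \<tau>)))\<^sup>2
                  + t * (pos (a (sel y \<tau>) \<bullet> y - b (sel y \<tau>)))\<^sup>2"
    using t maximal by (intro add_mono mult_left_mono) auto
  finally show "(pos (a (sel ((1 - t) *\<^sub>R x + t *\<^sub>R y) \<tau>) \<bullet> ((1 - t) *\<^sub>R x + t *\<^sub>R y)
                   - b (sel ((1 - t) *\<^sub>R x + t *\<^sub>R y) \<tau>)))\<^sup>2
      \<le> (1 - t) * (pos (a (sel x \<tau>) \<bullet> x - b (sel x \<tau>)))\<^sup>2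
         + t * (pos (a (sel y \<tau>) \<bullet> y - b (sel y \<tau>)))\<^sup>2"
    unfolding j_def .
qed simp

lemma convex_on_fobj:
  assumes "is_maxsel a b sel m \<beta>" "\<beta> \<le> m"
  shows "convex_on UNIV (fobj m \<beta> a b sel)"
proof -
  have "convex_on UNIV (\<lambda>x. (1/2) * (pos (a (sel x \<tau>) \<bullet> x - b (sel x \<tau>)))\<^sup>2)"
    if "\<tau> \<in> set_pmf (samp m \<beta>)" for \<tau>
    using that assms convex_on_maxsel_residual[of a b sel m \<beta> \<tau>]
    by (intro convex_on_cmul) (auto simp: set_pmf_samp)
  then show ?thesis
    unfolding fobj_def[abs_def] using assms(2) by (intro convex_on_expectation finite_set_pmf_samp)
qed

lemma fobj_avg_iter_le:
  assumes "is_maxsel a b sel m \<beta>" "\<beta> \<le> m" "1 \<le> k"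
  shows "fobj m \<beta> a b sel (avg_iter k xs) \<le> (1 / real k) * (\<Sum>l=1..k. fobj m \<beta> a b sel (xs ! l))"
proof -
  have "fobj m \<beta> a b sel (\<Sum>l=1..k. (1 / real k) *\<^sub>R xs ! l)
      \<le> (\<Sum>l=1..k. (1 / real k) * fobj m \<beta> a b sel (xs ! l))"
    using assms by (intro convex_on_sum[OF _ _ convex_on_fobj]) auto
  then show ?thesis
    unfolding avg_iter_def by (simp add: scaleR_sum_right sum_distrib_left)
qed

lemma expectation_skm_traj_Suc:
  fixes h :: "(real^'n) list \<Rightarrow> real"
  assumes "\<beta> \<le> m"
  shows "measure_pmf.expectation (skm_traj m \<beta> a b sel \<delta> x0 (Suc k)) h
    = measure_pmf.expectation (skm_traj m \<beta> a b sel \<delta> x0 k)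
        (\<lambda>xs. measure_pmf.expectation (samp m \<beta>)
                 (\<lambda>\<tau>. h (xs @ [skm_step a b sel \<delta> (last xs) \<tau>])))"
  using assms
  by (simp add: expectation_bind_pmf_finite finite_set_pmf_skm_traj finite_set_pmf_samp)

locale skm =
  fixes a :: "nat \<Rightarrow> real^'n" and b :: "nat \<Rightarrow> real" and m \<beta> :: nat
    and sel :: "real^'n \<Rightarrow> nat set \<Rightarrow> nat" and \<delta> :: real
  assumes beta_le_m: "\<beta> \<le> m"
    and rows_normalized: "\<forall>i<m. norm (a i) = 1"
    and feasible: "feas_set m a b \<noteq> {}"
    and maxsel: "is_maxsel a b sel m \<beta>"
    and delta_pos: "0 < \<delta>"
    and delta_less_2: "\<delta> < 2"
begin

lemma sel_less_m:
  assumes "\<tau> \<in> set_pmf (samp m \<beta>)"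
  shows "sel x \<tau> < m"
  using assms maxsel unfolding is_maxsel_def set_pmf_samp[OF beta_le_m] by blast

lemma fobj_nonneg: "0 \<le> fobj m \<beta> a b sel x"
  unfolding fobj_def by (intro integral_nonneg_AE) auto

lemma expectation_infdist_skm_step_le:
  "measure_pmf.expectation (samp m \<beta>) (\<lambda>\<tau>. (infdist (skm_step a b sel \<delta> x \<tau>) (feas_set m a b))\<^sup>2)
     + 2 * \<delta> * (2 - \<delta>) * fobj m \<beta> a b sel x
   \<le> (infdist x (feas_set m a b))\<^sup>2"
proof -
  let ?r = "\<lambda>\<tau>. pos (a (sel x \<tau>) \<bullet> x - b (sel x \<tau>))"
  have "measure_pmf.expectation (samp m \<beta>) (\<lambda>\<tau>. (infdist (skm_step a b sel \<delta> x \<tau>) (feas_set m a b))\<^sup>2)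
      \<le> measure_pmf.expectation (samp m \<beta>)
           (\<lambda>\<tau>. (infdist x (feas_set m a b))\<^sup>2 - \<delta> * (2 - \<delta>) * (?r \<tau>)\<^sup>2)"
  proof (rule expectation_mono_finite_pmf[OF finite_set_pmf_samp[OF beta_le_m]])
    fix \<tau> assume "\<tau> \<in> set_pmf (samp m \<beta>)"
    then have "sel x \<tau> < m"
      by (rule sel_less_m)
    then show "(infdist (skm_step a b sel \<delta> x \<tau>) (feas_set m a b))\<^sup>2
        \<le> (infdist x (feas_set m a b))\<^sup>2 - \<delta> * (2 - \<delta>) * (?r \<tau>)\<^sup>2"
      unfolding skm_step_def using rows_normalized feasible delta_pos
      by (intro infdist_relaxed_projection_le closed_feas_set) (auto simp: feas_set_def)
  qed
  also have "\<dots> = (infdist x (feas_set m a b))\<^sup>2 - 2 * \<delta> * (2 - \<delta>) * fobj m \<beta> a b sel x"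
    unfolding fobj_def
    by (simp add: integrable_measure_pmf_finite[OF finite_set_pmf_samp[OF beta_le_m]])
  finally show ?thesis
    by simp
qed

lemma fobj_le_infdist: "2 * \<delta> * (2 - \<delta>) * fobj m \<beta> a b sel x \<le> (infdist x (feas_set m a b))\<^sup>2"
proof -
  have "0 \<le> measure_pmf.expectation (samp m \<beta>)
              (\<lambda>\<tau>. (infdist (skm_step a b sel \<delta> x \<tau>) (feas_set m a b))\<^sup>2)"
    by (intro integral_nonneg_AE) auto
  then show ?thesis
    using expectation_infdist_skm_step_le[of x] by linarith
qed

lemma expectation_lyapunov_skm_traj_le:
  "measure_pmf.expectation (skm_traj m \<beta> a b sel \<delta> x0 k)
     (\<lambda>xs. (infdist (last xs) (feas_set m a b))\<^sup>2
             + 2 * \<delta> * (2 - \<delta>) * (\<Sum>l<k. fobj m \<beta> a b sel (xs ! l)))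
   \<le> (infdist x0 (feas_set m a b))\<^sup>2"
proof (induction k)
  case 0
  then show ?case by simp
next
  case (Suc k)
  let ?c = "2 * \<delta> * (2 - \<delta>)"
  let ?f = "fobj m \<beta> a b sel"
  let ?d = "\<lambda>x. (infdist x (feas_set m a b))\<^sup>2"
  let ?step = "skm_step a b sel \<delta>"
  let ?V = "\<lambda>k xs. ?d (last xs) + ?c * (\<Sum>l<k. ?f (xs ! l))"
  have "measure_pmf.expectation (samp m \<beta>) (\<lambda>\<tau>. ?V (Suc k) (xs @ [?step (last xs) \<tau>])) \<le> ?V k xs"
    if "xs \<in> set_pmf (skm_traj m \<beta> a b sel \<delta> x0 k)" for xs
  proof -
    have "(\<Sum>l<Suc k. ?f ((xs @ [y]) ! l)) = (\<Sum>l<k. ?f (xs ! l)) + ?f (last xs)" for y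
      using set_pmf_skm_traj[OF that] last_skm_traj[OF that] by (simp add: nth_append)
    then have "measure_pmf.expectation (samp m \<beta>) (\<lambda>\<tau>. ?V (Suc k) (xs @ [?step (last xs) \<tau>]))
        = measure_pmf.expectation (samp m \<beta>) (\<lambda>\<tau>. ?d (?step (last xs) \<tau>))
          + ?c * ?f (last xs) + ?c * (\<Sum>l<k. ?f (xs ! l))"
      by (simp add: integrable_measure_pmf_finite[OF finite_set_pmf_samp[OF beta_le_m]] algebra_simps)
    also have "\<dots> \<le> ?V k xs"
      using expectation_infdist_skm_step_le[of "last xs"] by simp
    finally show ?thesis .
  qed
  then have "measure_pmf.expectation (skm_traj m \<beta> a b sel \<delta> x0 (Suc k)) (?V (Suc k))
      \<le> measure_pmf.expectation (skm_traj m \<beta> a b sel \<delta> x0 k) (?V k)"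
    unfolding expectation_skm_traj_Suc[OF beta_le_m]
    by (intro expectation_mono_finite_pmf finite_set_pmf_skm_traj beta_le_m)
  also have "\<dots> \<le> ?d x0"
    using Suc.IH .
  finally show ?case .
qed

lemma expectation_sum_fobj_skm_traj_le:
  "measure_pmf.expectation (skm_traj m \<beta> a b sel \<delta> x0 k) (\<lambda>xs. \<Sum>l=1..k. fobj m \<beta> a b sel (xs ! l))
   \<le> (infdist x0 (feas_set m a b))\<^sup>2 / (2 * \<delta> * (2 - \<delta>))"
proof -
  let ?c = "2 * \<delta> * (2 - \<delta>)"
  let ?f = "fobj m \<beta> a b sel"
  let ?d = "\<lambda>x. (infdist x (feas_set m a b))\<^sup>2"
  have c_pos: "0 < ?c"
    using delta_pos delta_less_2 by simp
  have "?c * (\<Sum>l=1..k. ?f (xs ! l)) \<le> ?d (last xs) + ?c * (\<Sum>l<k. ?f (xs ! l))"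
    if "xs \<in> set_pmf (skm_traj m \<beta> a b sel \<delta> x0 k)" for xs
  proof -
    have "?c * (\<Sum>l=1..k. ?f (xs ! l)) \<le> ?c * (\<Sum>l\<le>k. ?f (xs ! l))"
      using c_pos by (intro mult_left_mono sum_mono2) (auto simp: fobj_nonneg)
    also have "\<dots> = ?c * (\<Sum>l<k. ?f (xs ! l)) + ?c * ?f (last xs)"
      using last_skm_traj[OF that] by (simp add: lessThan_Suc_atMost[symmetric] distrib_left)
    also have "\<dots> \<le> ?c * (\<Sum>l<k. ?f (xs ! l)) + ?d (last xs)"
      using fobj_le_infdist[of "last xs"] by simp
    finally show ?thesis
      by simp
  qed
  then have "?c * measure_pmf.expectation (skm_traj m \<beta> a b sel \<delta> x0 k) (\<lambda>xs. \<Sum>l=1..k. ?f (xs ! l))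
      \<le> measure_pmf.expectation (skm_traj m \<beta> a b sel \<delta> x0 k)
           (\<lambda>xs. ?d (last xs) + ?c * (\<Sum>l<k. ?f (xs ! l)))"
    by (subst integral_mult_right_zero[symmetric])
       (intro expectation_mono_finite_pmf finite_set_pmf_skm_traj beta_le_m)
  also have "\<dots> \<le> ?d x0"
    by (rule expectation_lyapunov_skm_traj_le)
  finally show ?thesis
    using c_pos by (simp add: pos_le_divide_eq mult.commute)
qed

end

theorem corollary2:
  fixes a :: "nat \<Rightarrow> real^'n" and b :: "nat \<Rightarrow> real" and m \<beta> k :: nat
    and sel :: "real^'n \<Rightarrow> nat set \<Rightarrow> nat" and \<delta> :: real and x0 :: "real^'n"
  assumes "1 \<le> \<beta>" and "\<beta> \<le> m"
    and "\<forall>i<m. norm (a i) = 1"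
    and "feas_set m a b \<noteq> {}"
    and "is_maxsel a b sel m \<beta>"
    and "0 < \<delta>" and "\<delta> < 2"
    and "1 \<le> k"
  shows "measure_pmf.expectation (skm_traj m \<beta> a b sel \<delta> x0 k)
           (\<lambda>xs. fobj m \<beta> a b sel (avg_iter k xs))
         \<le> (infdist x0 (feas_set m a b))^2 / (2 * \<delta> * real k * (2 - \<delta>))"
proof -
  interpret skm a b m \<beta> sel \<delta>
    using assms(2-7) by unfold_locales
  let ?T = "skm_traj m \<beta> a b sel \<delta> x0 k"
  have "measure_pmf.expectation ?T (\<lambda>xs. fobj m \<beta> a b sel (avg_iter k xs))
      \<le> measure_pmf.expectation ?T (\<lambda>xs. (1 / real k) * (\<Sum>l=1..k. fobj m \<beta> a b sel (xs ! l)))"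
    using assms by (intro expectation_mono_finite_pmf finite_set_pmf_skm_traj fobj_avg_iter_le)
  also have "\<dots> = (1 / real k) * measure_pmf.expectation ?T (\<lambda>xs. \<Sum>l=1..k. fobj m \<beta> a b sel (xs ! l))"
    by simp
  also have "\<dots> \<le> (1 / real k) * ((infdist x0 (feas_set m a b))\<^sup>2 / (2 * \<delta> * (2 - \<delta>)))"
    by (intro mult_left_mono expectation_sum_fobj_skm_traj_le) auto
  finally show ?thesis
    by (simp add: field_simps)
qed

end
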